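(* Let $A$ be a synaptic algebra, let $p,q\in P$ be in generic position ($p\wedge q=p\wedge q^{\perp}=p^{\perp}\wedge q=p^{\perp}\wedge q^{\perp}=0$), and let $c:=(pqp+p^{\perp}q^{\perp}p^{\perp})^{1/2}$. Then the spectrum of $p+q$ is $\sigma(p+q)=\{1\pm\gamma:\gamma\in\sigma(c)\}$.
   Context: Synaptic algebra (Foulis): $R$ is a real linear associative algebra with unit $1$, and $A\subseteq R$ is a real linear subspace with $1\in A$. For $a,b\in A$ write $aCb$ iff $ab=ba$; $C(a):=\{b\in A: aCb\}$; $CC(a):=\{b\in A: bCd \text{ for all } d\in C(a)\}$. $A$ is a synaptic algebra with enveloping algebra $R$ iff: (SA1) $A$ is a partially ordered archimedean real linear space with positive cone $A^+$, $1$ is an order unit, $\|\cdot\|$ the order-unit norm; (SA2) $a\in A\Rightarrow a^2\in A^+$; (SA3) $a,b\in A^+\Rightarrow aba\in A^+$; (SA4) if $a\in A$, $b\in A^+$, $aba=0$ then $ab=ba=0$; (SA5) if $a\in A^+$ there is $b\in A^+\cap CC(a)$ with $b^2=a$; (SA6) for $a\in A$ there is $p=p^2\in A$ with $ab=0\Leftrightarrow pb=0$ for all $b\in A$; (SA7) if $1\le a$ there is $b\in A$ with $ab=ba=1$; (SA8) if $a,b\in A$, $a_1\le a_2\le\cdots$ are pairwise commuting elements of $C(b)$ with $\|a-a_n\|\to0$, then $a\in C(b)$. $A$ is nondegenerate. $P:=\{p\in A:p=p^2\}$ with inherited order is an orthomodular lattice with $p^{\perp}:=1-p$, meet $\wedge$,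 join $\vee$. For $0\le a$, $a^{1/2}$ is its unique positive square root in $A$. Real numbers $\lambda$ are identified with $\lambda1\in A$. The spectrum of $a\in A$ is $\sigma(a):=\{\lambda\in\mathbb{R}: a-\lambda \text{ is not invertible}\}$, where $b\in A$ is invertible iff there is $d\in A$ with $bd=db=1$. *)

theory Defs
  imports Complex_Main
begin

text \<open>The enveloping algebra R is a type of class real_algebra_1 (real linear
associative algebra with unit). A synaptic algebra is a subset A of R together
with its positive cone Pos.\<close>

definition sa_le :: "'a::real_algebra_1 set \<Rightarrow> 'a \<Rightarrow> 'a \<Rightarrow> bool" where
  "sa_le Pos a b \<longleftrightarrow> b - a \<in> Pos"

definition sa_commutant :: "'a::real_algebra_1 set \<Rightarrow> 'a \<Rightarrow> 'a set" where
  "sa_commutant A a = {b \<in> A. a * b = b * a}"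

definition sa_bicommutant :: "'a::real_algebra_1 set \<Rightarrow> 'a \<Rightarrow> 'a set" where
  "sa_bicommutant A a = {b \<in> A. \<forall>d \<in> sa_commutant A a. b * d = d * b}"

definition sa_norm :: "'a::real_algebra_1 set \<Rightarrow> 'a \<Rightarrow> real" where
  "sa_norm Pos a = Inf {l::real. 0 < l \<and> sa_le Pos (- (l *\<^sub>R 1)) a \<and> sa_le Pos a (l *\<^sub>R 1)}"

definition synaptic_algebra :: "'a::real_algebra_1 set \<Rightarrow> 'a set \<Rightarrow> bool" where
  "synaptic_algebra A Pos \<longleftrightarrow>
    \<comment> \<open>A is a real linear subspace containing 1; nondegenerate\<close>
    1 \<in> A \<and> 0 \<in> A \<and> (\<forall>a\<in>A. \<forall>b\<in>A. a + b \<in> A) \<and> (\<forall>a\<in>A. \<forall>r::real. r *\<^sub>R a \<in> A) \<and>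
    (0::'a) \<noteq> 1 \<and>
    \<comment> \<open>SA1: partially ordered archimedean space, positive cone Pos, 1 an order unit\<close>
    Pos \<subseteq> A \<and> 0 \<in> Pos \<and> (\<forall>a\<in>Pos. \<forall>b\<in>Pos. a + b \<in> Pos) \<and>
    (\<forall>a\<in>Pos. \<forall>r::real. 0 \<le> r \<longrightarrow> r *\<^sub>R a \<in> Pos) \<and>
    (\<forall>a\<in>Pos. - a \<in> Pos \<longrightarrow> a = 0) \<and>
    (\<forall>a\<in>A. \<exists>l::real. sa_le Pos a (l *\<^sub>R 1)) \<and>
    (\<forall>a\<in>A. \<forall>b\<in>A. (\<forall>n::nat. sa_le Pos (of_nat n *\<^sub>R a) b) \<longrightarrow> sa_le Pos a 0) \<and>
    \<comment> \<open>SA2\<close>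
    (\<forall>a\<in>A. a * a \<in> Pos) \<and>
    \<comment> \<open>SA3\<close>
    (\<forall>a\<in>Pos. \<forall>b\<in>Pos. a * b * a \<in> Pos) \<and>
    \<comment> \<open>SA4\<close>
    (\<forall>a\<in>A. \<forall>b\<in>Pos. a * b * a = 0 \<longrightarrow> a * b = 0 \<and> b * a = 0) \<and>
    \<comment> \<open>SA5\<close>
    (\<forall>a\<in>Pos. \<exists>b\<in>Pos \<inter> sa_bicommutant A a. b * b = a) \<and>
    \<comment> \<open>SA6\<close>
    (\<forall>a\<in>A. \<exists>p\<in>A. p * p = p \<and> (\<forall>b\<in>A. a * b = 0 \<longleftrightarrow> p * b = 0)) \<and>
    \<comment> \<open>SA7\<close>
    (\<forall>a\<in>A. sa_le Pos 1 a \<longrightarrow> (\<exists>b\<in>A. a * b = 1 \<and> b * a = 1)) \<and>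
    \<comment> \<open>SA8\<close>
    (\<forall>a\<in>A. \<forall>b\<in>A. \<forall>s::nat \<Rightarrow> 'a.
       (\<forall>n. s n \<in> sa_commutant A b) \<and> (\<forall>m n. s m * s n = s n * s m) \<and>
       (\<forall>n. sa_le Pos (s n) (s (Suc n))) \<and>
       ((\<lambda>n. sa_norm Pos (a - s n)) \<longlonglongrightarrow> 0)
       \<longrightarrow> a \<in> sa_commutant A b)"

definition sa_proj :: "'a::real_algebra_1 set \<Rightarrow> 'a set" where
  "sa_proj A = {p \<in> A. p * p = p}"

definition sa_is_meet :: "'a::real_algebra_1 set \<Rightarrow> 'a set \<Rightarrow> 'a \<Rightarrow> 'a \<Rightarrow> 'a \<Rightarrow> bool" where
  "sa_is_meet A Pos p q m \<longleftrightarrow> m \<in> sa_proj A \<and> sa_le Pos m p \<and> sa_le Pos m q \<and>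
     (\<forall>r\<in>sa_proj A. sa_le Pos r p \<and> sa_le Pos r q \<longrightarrow> sa_le Pos r m)"

definition sa_sqrt :: "'a::real_algebra_1 set \<Rightarrow> 'a \<Rightarrow> 'a" where
  "sa_sqrt Pos a = (THE b. b \<in> Pos \<and> b * b = a)"

definition sa_invertible :: "'a::real_algebra_1 set \<Rightarrow> 'a \<Rightarrow> bool" where
  "sa_invertible A b \<longleftrightarrow> (\<exists>d\<in>A. b * d = 1 \<and> d * b = 1)"

definition sa_spectrum :: "'a::real_algebra_1 set \<Rightarrow> 'a \<Rightarrow> real set" where
  "sa_spectrum A a = {l::real. \<not> sa_invertible A (a - l *\<^sub>R 1)}"

end

theory Submission
  imports Defs
begin

text \<open>Put b = p + q - 1 and d = p - q. Then pqp + p'q'p' = b*b, so c = |b|, while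
  b*b + d*d = 1 and bd = -db. For real m the commuting factors of
  (b - m)(b + m) = (c - m)(c + m) show that, once the spectrum of b is known to be symmetric,
  b - m is invertible iff c - m and c + m are. If m*m \<noteq> 1, the anticommuting d turns an inverse
  y of b - m into the inverse (b - m - dyd)/(1 - m*m) of b + m. For m = 1 or m = -1 symmetry says
  that p + q is invertible iff p' + q' is, and here generic position enters: if p' + q' \<ge> e > 0,
  then (p - q)*(p - q) = (p' + q')(p + q) is at least e on the ranges of p and q, and as
  p' \<and> q' = 0 the negative part of (p - q)*(p - q) - e/2 must vanish.\<close>

lemma inverse_commute:
  fixes b w y :: "'a::monoid_mult"
  assumes "b * w = 1" "w * b = 1" "y * b = b * y"
  shows "y * w = w * y"
proof -
  have "y * w = w * (b * y) * w" using assms(2) by (metis mult.assoc mult_1_left)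
  also have "\<dots> = w * y * (b * w)" using assms(3) by (metis mult.assoc)
  finally show ?thesis using assms(1) by simp
qed

context
  fixes p q :: "'a::ring_1"
  assumes p: "p * p = p" and q: "q * q = q"
begin

private lemma idem_left: "p * (p * z) = p * z" "q * (q * z) = q * z"
  using p q by (simp_all flip: mult.assoc)

lemma idempotents_sq_diff: "(p - q) * (p - q) = ((1 - p) + (1 - q)) * (p + q)"
  by (simp add: algebra_simps p q mult_2 mult_2_right)

lemma idempotents_compl_sum_commute:
  "((1 - p) + (1 - q)) * (p + q) = (p + q) * ((1 - p) + (1 - q))"
  by (simp add: algebra_simps p q mult_2 mult_2_right)

lemma idempotents_sq_diff_commute:
  "(p - q) * (p - q) * p = p * ((p - q) * (p - q))"
  "(p - q) * (p - q) * q = q * ((p - q) * (p - q))"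
  by (simp_all add: algebra_simps p q idem_left)

lemma idempotents_compress_sq_diff:
  "p * ((p - q) * (p - q)) * p = p * ((1 - p) + (1 - q)) * p"
  "q * ((p - q) * (p - q)) * q = q * ((1 - p) + (1 - q)) * q"
  by (simp_all add: algebra_simps p q idem_left mult_2 mult_2_right)

lemma idempotents_sum_sq: "p * q * p + (1 - p) * (1 - q) * (1 - p) = (p + q - 1) * (p + q - 1)"
  by (simp add: algebra_simps p q idem_left mult_2 mult_2_right)

lemma idempotents_anticommute: "(p + q - 1) * (p - q) = - ((p - q) * (p + q - 1))"
  by (simp add: algebra_simps p q mult_2 mult_2_right)

lemma idempotents_sq_add: "(p + q - 1) * (p + q - 1) + (p - q) * (p - q) = 1"
  by (simp add: algebra_simps p q mult_2 mult_2_right)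

end

lemma anticommute_inverse:
  fixes b d y :: "'a::real_algebra_1"
  assumes bd: "b * d = - (d * b)" and bbdd: "b * b + d * d = 1" and m: "m * m \<noteq> 1"
    and y: "(b - m *\<^sub>R 1) * y = 1" "y * (b - m *\<^sub>R 1) = 1"
  defines "w \<equiv> (1 / (1 - m * m)) *\<^sub>R (b - m *\<^sub>R 1 - d * y * d)"
  shows "(b + m *\<^sub>R 1) * w = 1" "w * (b + m *\<^sub>R 1) = 1"
proof -
  have shift: "(b + m *\<^sub>R 1) * d = - (d * (b - m *\<^sub>R 1))" "d * (b + m *\<^sub>R 1) = - ((b - m *\<^sub>R 1) * d)"
    using bd by (simp_all add: algebra_simps)
  have l: "(b + m *\<^sub>R 1) * (d * y * d) = - (d * d)"
    using shift(1) y(1) by (metis mult.assoc mult_minus_left mult_1_right)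
  have r: "(d * y * d) * (b + m *\<^sub>R 1) = - (d * d)"
    using shift(2) y(2) by (metis mult.assoc mult_minus_right mult_1_right)
  have "(b + m *\<^sub>R 1) * (b - m *\<^sub>R 1 - d * y * d) = (b * b + d * d) - (m * m) *\<^sub>R 1"
    unfolding right_diff_distrib[of "b + m *\<^sub>R 1"] l by (simp add: algebra_simps)
  moreover have "(b - m *\<^sub>R 1 - d * y * d) * (b + m *\<^sub>R 1) = (b * b + d * d) - (m * m) *\<^sub>R 1"
    unfolding left_diff_distrib[of _ _ "b + m *\<^sub>R 1"] r by (simp add: algebra_simps)
  moreover have "1 - (m * m) *\<^sub>R 1 = (1 - m * m) *\<^sub>R (1::'a)" by (simp add: scaleR_diff_left)
  moreover have "1 - m * m \<noteq> 0" using m by simp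
  ultimately show "(b + m *\<^sub>R 1) * w = 1" "w * (b + m *\<^sub>R 1) = 1"
    unfolding w_def bbdd by simp_all
qed

locale synaptic =
  fixes A Pos :: "'a::real_algebra_1 set"
  assumes synaptic_algebra: "synaptic_algebra A Pos"
begin

lemma one_mem: "1 \<in> A"
  using synaptic_algebra unfolding synaptic_algebra_def by auto

lemma add_mem: "a \<in> A \<Longrightarrow> b \<in> A \<Longrightarrow> a + b \<in> A"
  using synaptic_algebra unfolding synaptic_algebra_def by auto

lemma scaleR_mem: "a \<in> A \<Longrightarrow> r *\<^sub>R a \<in> A"
  using synaptic_algebra unfolding synaptic_algebra_def by auto

lemma pos_mem: "a \<in> Pos \<Longrightarrow> a \<in> A"
  using synaptic_algebra unfolding synaptic_algebra_def by auto

lemma pos_add: "a \<in> Pos \<Longrightarrow> b \<in> Pos \<Longrightarrow> a + b \<in> Pos"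
  using synaptic_algebra unfolding synaptic_algebra_def by auto

lemma pos_scaleR: "a \<in> Pos \<Longrightarrow> 0 \<le> r \<Longrightarrow> r *\<^sub>R a \<in> Pos"
  using synaptic_algebra unfolding synaptic_algebra_def by auto

lemma pos_antisym: "a \<in> Pos \<Longrightarrow> - a \<in> Pos \<Longrightarrow> a = 0"
  using synaptic_algebra unfolding synaptic_algebra_def by auto

lemma order_unit: "a \<in> A \<Longrightarrow> \<exists>l. l *\<^sub>R 1 - a \<in> Pos"
  using synaptic_algebra unfolding synaptic_algebra_def sa_le_def by auto

lemma square_pos: "a \<in> A \<Longrightarrow> a * a \<in> Pos"
  using synaptic_algebra unfolding synaptic_algebra_def by auto

lemma pos_conj: "a \<in> Pos \<Longrightarrow> b \<in> Pos \<Longrightarrow> a * b * a \<in> Pos"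
  using synaptic_algebra unfolding synaptic_algebra_def by auto

lemma conj_pos_eq_zero: "a \<in> A \<Longrightarrow> b \<in> Pos \<Longrightarrow> a * b * a = 0 \<Longrightarrow> a * b = 0 \<and> b * a = 0"
  using synaptic_algebra unfolding synaptic_algebra_def by blast

lemma pos_sqrt_exists: "a \<in> Pos \<Longrightarrow> \<exists>b\<in>Pos \<inter> sa_bicommutant A a. b * b = a"
  using synaptic_algebra unfolding synaptic_algebra_def by blast

lemma annihilator_proj_exists:
  "a \<in> A \<Longrightarrow> \<exists>e\<in>A. e * e = e \<and> (\<forall>b\<in>A. a * b = 0 \<longleftrightarrow> e * b = 0)"
  using synaptic_algebra unfolding synaptic_algebra_def by blast

lemma invertible_if_ge_one: "a \<in> A \<Longrightarrow> a - 1 \<in> Pos \<Longrightarrow> sa_invertible A a"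
  using synaptic_algebra unfolding synaptic_algebra_def sa_le_def sa_invertible_def by blast

lemma uminus_mem: "a \<in> A \<Longrightarrow> - a \<in> A"
  using scaleR_mem[of a "-1"] by simp

lemma diff_mem: "a \<in> A \<Longrightarrow> b \<in> A \<Longrightarrow> a - b \<in> A"
  using add_mem[of a "- b"] uminus_mem by simp

lemma scaleR_one_mem: "r *\<^sub>R 1 \<in> A"
  using scaleR_mem one_mem by blast

lemma one_pos: "1 \<in> Pos"
  using square_pos[OF one_mem] by simp

lemma pos_add_eq_zero: "a \<in> Pos \<Longrightarrow> b \<in> Pos \<Longrightarrow> a + b = 0 \<Longrightarrow> a = 0"
  using pos_antisym by (metis add.inverse_unique)

lemma square_eq_zero: "a \<in> A \<Longrightarrow> a * a = 0 \<Longrightarrow> a = 0"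
  using conj_pos_eq_zero[OF _ one_pos] by simp

lemma jordan_mem:
  assumes "a \<in> A" "b \<in> A"
  shows "a * b + b * a \<in> A"
proof -
  have "(a + b) * (a + b) - a * a - b * b \<in> A"
    using assms by (meson diff_mem add_mem pos_mem square_pos)
  then show ?thesis by (simp add: algebra_simps)
qed

lemma mult_mem_if_commute:
  assumes "a \<in> A" "b \<in> A" "a * b = b * a"
  shows "a * b \<in> A"
proof -
  have "(1/2::real) *\<^sub>R (a * b + b * a) \<in> A"
    using jordan_mem[OF assms(1,2)] scaleR_mem by blast
  then show ?thesis using assms(3) by (simp flip: scaleR_add_right)
qed

lemma conj_mem:
  assumes "a \<in> A" "b \<in> A"
  shows "a * b * a \<in> A"
proof -
  have "a * (a * b + b * a) + (a * b + b * a) * a - ((a * a) * b + b * (a * a)) \<in> A"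
    using assms by (meson diff_mem jordan_mem pos_mem square_pos)
  also have "a * (a * b + b * a) + (a * b + b * a) * a - ((a * a) * b + b * (a * a))
      = 2 *\<^sub>R (a * b * a)"
    by (simp add: algebra_simps scaleR_2)
  finally show ?thesis using scaleR_mem[of _ "1/2"] by fastforce
qed

lemma conj_pos_if_commute:
  assumes "a \<in> A" "x \<in> Pos" "a * x = x * a"
  shows "a * x * a \<in> Pos"
proof -
  obtain s where s: "s \<in> Pos" "s \<in> sa_bicommutant A x" "s * s = x"
    using pos_sqrt_exists[OF assms(2)] by blast
  have "a \<in> sa_commutant A x" using assms unfolding sa_commutant_def by auto
  then have "s * a = a * s" using s(2) unfolding sa_bicommutant_def by auto
  then have "a * x * a = s * (a * a) * s" using s(3) by (metis mult.assoc)
  then show ?thesis using pos_conj[OF s(1) square_pos[OF assms(1)]] by simp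
qed

lemma pos_sqrt_unique:
  assumes x: "x \<in> Pos" "x * x = a"
    and r: "r \<in> Pos" "r \<in> sa_bicommutant A a" "r * r = a"
  shows "x = r"
proof -
  have "x \<in> sa_commutant A a" using x pos_mem unfolding sa_commutant_def by (auto simp: mult.assoc)
  then have xr: "x * r = r * x" using r(2) unfolding sa_bicommutant_def by auto
  define d where "d = x - r"
  have d: "d \<in> A" unfolding d_def using x r pos_mem diff_mem by blast
  have "d * x = x * d" "d * r = r * d" unfolding d_def using xr by (simp_all add: algebra_simps)
  then have dx: "d * x * d \<in> Pos" and dr: "d * r * d \<in> Pos"
    using conj_pos_if_commute[OF d] x(1) r(1) by blast+
  have "d * x * d + d * r * d = d * (x + r) * d" by (simp add: algebra_simps)
  also have "d * (x + r) = x * x - r * r" unfolding d_def using xr by (simp add: algebra_simps)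
  finally have "d * x * d + d * r * d = 0" using x r by simp
  then have "d * x * d = 0" "d * r * d = 0"
    using pos_add_eq_zero dx dr by (metis add.commute)+
  then have "d * x = 0" "d * r = 0"
    using conj_pos_eq_zero d x(1) r(1) by blast+
  then have "d * d = 0" unfolding d_def by (simp add: right_diff_distrib)
  then have "d = 0" using square_eq_zero d by blast
  then show ?thesis unfolding d_def by simp
qed

lemma
  assumes "a \<in> Pos"
  shows sqrt_pos: "sa_sqrt Pos a \<in> Pos"
    and sqrt_mult_self: "sa_sqrt Pos a * sa_sqrt Pos a = a"
    and sqrt_commute: "x \<in> A \<Longrightarrow> x * a = a * x \<Longrightarrow> sa_sqrt Pos a * x = x * sa_sqrt Pos a"
proof -
  obtain r where r: "r \<in> Pos" "r \<in> sa_bicommutant A a" "r * r = a"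
    using pos_sqrt_exists[OF assms] by blast
  have "sa_sqrt Pos a = r"
    unfolding sa_sqrt_def using r pos_sqrt_unique[OF _ _ r] by blast
  then show "sa_sqrt Pos a \<in> Pos" "sa_sqrt Pos a * sa_sqrt Pos a = a"
    and "x \<in> A \<Longrightarrow> x * a = a * x \<Longrightarrow> sa_sqrt Pos a * x = x * sa_sqrt Pos a"
    using r unfolding sa_bicommutant_def sa_commutant_def by auto
qed

lemma invertible_mult_iff:
  assumes u: "u \<in> A" and v: "v \<in> A" and uv: "u * v = v * u"
  shows "sa_invertible A (u * v) \<longleftrightarrow> sa_invertible A u \<and> sa_invertible A v"
proof
  assume "sa_invertible A (u * v)"
  then obtain z where z: "z \<in> A" "u * v * z = 1" "z * (u * v) = 1"
    unfolding sa_invertible_def by blast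
  have zu: "u * z = z * u" and zv: "v * z = z * v"
    using inverse_commute[OF z(2,3)] uv by (metis mult.assoc)+
  have "v * z \<in> A" "u * (v * z) = 1" "v * z * u = 1"
    using mult_mem_if_commute[OF v z(1) zv] z(2) zu uv by (metis mult.assoc)+
  moreover have "u * z \<in> A" "v * (u * z) = 1" "u * z * v = 1"
    using mult_mem_if_commute[OF u z(1) zu] z(2) zv uv by (metis mult.assoc)+
  ultimately show "sa_invertible A u \<and> sa_invertible A v"
    unfolding sa_invertible_def by blast
next
  assume "sa_invertible A u \<and> sa_invertible A v"
  then obtain a b where a: "a \<in> A" "u * a = 1" "a * u = 1" and b: "b \<in> A" "v * b = 1" "b * v = 1"
    unfolding sa_invertible_def by blast
  have "v * a = a * v" using inverse_commute[OF a(2,3)] uv by simp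
  then have ab: "b * a = a * b" using inverse_commute[OF b(2,3)] by simp
  have "u * v * (b * a) = u * (v * b) * a" "b * a * (u * v) = b * (a * u) * v"
    by (simp_all add: mult.assoc)
  then have "b * a \<in> A" "u * v * (b * a) = 1" "b * a * (u * v) = 1"
    using mult_mem_if_commute[OF b(1) a(1) ab] a b by simp_all
  then show "sa_invertible A (u * v)" unfolding sa_invertible_def by blast
qed

lemma invertible_uminus: "sa_invertible A u \<Longrightarrow> sa_invertible A (- u)"
  unfolding sa_invertible_def using uminus_mem by (metis minus_mult_minus)

lemma invertible_if_ge_scalar:
  assumes "a \<in> A" "0 < e" "a - e *\<^sub>R 1 \<in> Pos"
  shows "sa_invertible A a"
proof -
  have "(1/e) *\<^sub>R a - 1 \<in> Pos"
    using pos_scaleR[OF assms(3), of "1/e"] assms(2) by (simp add: scaleR_diff_right)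
  then obtain b where "b \<in> A" "(1/e) *\<^sub>R a * b = 1" "b * ((1/e) *\<^sub>R a) = 1"
    using invertible_if_ge_one scaleR_mem assms(1) unfolding sa_invertible_def by blast
  then have "(1/e) *\<^sub>R b \<in> A" "a * ((1/e) *\<^sub>R b) = 1" "(1/e) *\<^sub>R b * a = 1"
    using scaleR_mem by simp_all
  then show ?thesis unfolding sa_invertible_def by blast
qed

lemma pos_invertible_ge_scalar:
  assumes a: "a \<in> Pos" and "sa_invertible A a"
  shows "\<exists>e>0. a - e *\<^sub>R 1 \<in> Pos"
proof -
  obtain w where w: "w \<in> A" "a * w = 1" "w * a = 1"
    using assms(2) unfolding sa_invertible_def by blast
  define s where "s = sa_sqrt Pos a"
  have s: "s \<in> Pos" "s * s = a" "s * w = w * s"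
    using sqrt_pos[OF a] sqrt_mult_self[OF a] sqrt_commute[OF a w(1)] w unfolding s_def by auto
  obtain l where l: "l *\<^sub>R 1 - w \<in> Pos" using order_unit[OF w(1)] by blast
  have "s * (l *\<^sub>R 1 - w) * s = l *\<^sub>R a - 1"
    using s w(3) by (simp add: algebra_simps)
  then have la: "l *\<^sub>R a - 1 \<in> Pos" using pos_conj[OF s(1) l] by simp
  have "0 < l"
  proof (rule ccontr)
    assume "\<not> 0 < l"
    then have "(l *\<^sub>R a - 1) + (- l) *\<^sub>R a \<in> Pos" using pos_add[OF la pos_scaleR[OF a, of "- l"]] by simp
    then have "- 1 \<in> Pos" by simp
    then show False using pos_antisym[OF one_pos] by simp
  qed
  moreover have "a - (1/l) *\<^sub>R 1 \<in> Pos"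
    using pos_scaleR[OF la, of "1/l"] \<open>0 < l\<close> by (simp add: scaleR_diff_right)
  ultimately show ?thesis by (intro exI[of _ "1/l"]) simp
qed

lemma proj_pos: "p \<in> sa_proj A \<Longrightarrow> p \<in> Pos"
  unfolding sa_proj_def using square_pos by force

lemma proj_compl: "p \<in> sa_proj A \<Longrightarrow> 1 - p \<in> sa_proj A"
  unfolding sa_proj_def using diff_mem one_mem by (auto simp: algebra_simps)

lemma proj_le_compl_if_orthogonal:
  assumes e: "e \<in> sa_proj A" and p: "p \<in> sa_proj A" and ep: "e * p = 0"
  shows "sa_le Pos e (1 - p)"
proof -
  have "p * e = 0"
    using conj_pos_eq_zero[of e p] e proj_pos[OF p] ep unfolding sa_proj_def by simp
  moreover have "1 - p - e \<in> A" using e p diff_mem one_mem unfolding sa_proj_def by blast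
  ultimately have "1 - p - e \<in> sa_proj A"
    using e p ep unfolding sa_proj_def by (simp add: algebra_simps)
  then show ?thesis unfolding sa_le_def using proj_pos by (simp add: diff_diff_eq)
qed

lemma eq_zero_if_mult_projs_eq_zero:
  assumes v: "v \<in> A" and p: "p \<in> sa_proj A" and q: "q \<in> sa_proj A"
    and vp: "v * p = 0" and vq: "v * q = 0"
    and meet: "sa_is_meet A Pos (1 - p) (1 - q) 0"
  shows "v = 0"
proof -
  obtain e where e: "e \<in> A" "e * e = e" and ann: "\<forall>b\<in>A. v * b = 0 \<longleftrightarrow> e * b = 0"
    using annihilator_proj_exists[OF v] by blast
  have proj: "e \<in> sa_proj A" using e unfolding sa_proj_def by simp
  have "e * p = 0" "e * q = 0" using ann vp vq p q unfolding sa_proj_def by auto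
  then have "sa_le Pos e (1 - p)" "sa_le Pos e (1 - q)"
    using proj_le_compl_if_orthogonal proj p q by blast+
  then have "sa_le Pos e 0" using meet proj unfolding sa_is_meet_def by blast
  then have "e = 0" using pos_antisym proj_pos[OF proj] unfolding sa_le_def by simp
  then show ?thesis using ann one_mem by (metis mult_1_right)
qed

text \<open>With r = |y| and v = r - y (twice the negative part of y) one has y v = - r v, so
  v (pyp - ep) v = - (vp) r (vp) - e (vp)(vp) is both positive and the negative of a positive.\<close>
lemma neg_part_mult_proj_eq_zero:
  assumes p: "p \<in> sa_proj A" and y: "y \<in> A" "y * p = p * y"
    and e: "0 < e" "p * y * p - e *\<^sub>R p \<in> Pos"
  shows "(sa_sqrt Pos (y * y) - y) * p = 0"
proof -
  define r where "r = sa_sqrt Pos (y * y)"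
  define v where "v = r - y"
  define w where "w = v * p"
  let ?z = "p * y * p - e *\<^sub>R p"
  have yy: "y * y \<in> Pos" using square_pos y(1) by blast
  have pp: "p * p = p" and pA: "p \<in> A" using p unfolding sa_proj_def by auto
  have "p * (y * y) = (y * y) * p" using y(2) by (metis mult.assoc)
  then have r: "r \<in> Pos" "r * r = y * y" "r * y = y * r" "r * p = p * r"
    using sqrt_pos[OF yy] sqrt_mult_self[OF yy] sqrt_commute[OF yy] y(1) pA
    unfolding r_def by (auto simp: mult.assoc)
  have comm: "r * (p * z) = p * (r * z)" "y * (p * z) = p * (y * z)" "y * (r * z) = r * (y * z)"
    "p * (p * z) = p * z" "r * (r * z) = y * (y * z)" for z
    using pp r y by (metis mult.assoc)+
  have v: "v \<in> A" unfolding v_def using r(1) y(1) pos_mem diff_mem by blast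
  have vp: "v * p = p * v" and wr: "w * r = r * w" and vz: "v * ?z = ?z * v"
    unfolding w_def v_def by (simp_all add: algebra_simps comm pp r(4) y(2) flip: r(3))
  have w: "w \<in> A" unfolding w_def using mult_mem_if_commute[OF v pA vp] .
  have "v * ?z * v + w * r * w = - (e *\<^sub>R (w * w))"
    unfolding w_def v_def by (simp add: algebra_simps comm pp r(2,4) y(2) flip: r(3))
  moreover have "v * ?z * v + w * r * w \<in> Pos"
    using pos_add conj_pos_if_commute[OF v e(2) vz] conj_pos_if_commute[OF w r(1) wr] by blast
  moreover have "e *\<^sub>R (w * w) \<in> Pos" using pos_scaleR square_pos[OF w] e(1) by simp
  ultimately have "e *\<^sub>R (w * w) = 0" using pos_antisym by metis
  then have "w = 0" using square_eq_zero[OF w] e(1) by simp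
  then show ?thesis unfolding w_def v_def r_def .
qed

lemma pos_if_compressions_ge:
  assumes p: "p \<in> sa_proj A" and q: "q \<in> sa_proj A"
    and meet: "sa_is_meet A Pos (1 - p) (1 - q) 0"
    and y: "y \<in> A" "y * p = p * y" "y * q = q * y"
    and e: "0 < e" "p * y * p - e *\<^sub>R p \<in> Pos" "q * y * q - e *\<^sub>R q \<in> Pos"
  shows "y \<in> Pos"
proof -
  define r where "r = sa_sqrt Pos (y * y)"
  have r: "r \<in> Pos" using sqrt_pos square_pos y(1) unfolding r_def by blast
  have "(r - y) * p = 0" "(r - y) * q = 0"
    using neg_part_mult_proj_eq_zero p q y e unfolding r_def by blast+
  then have "r - y = 0"
    using eq_zero_if_mult_projs_eq_zero[OF _ p q _ _ meet] r y(1) pos_mem diff_mem by blast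
  then show ?thesis using r by simp
qed

lemma invertible_add_if_invertible_add_compl:
  assumes p: "p \<in> sa_proj A" and q: "q \<in> sa_proj A"
    and meet: "sa_is_meet A Pos (1 - p) (1 - q) 0"
    and inv: "sa_invertible A ((1 - p) + (1 - q))"
  shows "sa_invertible A (p + q)"
proof -
  define a where "a = (1 - p) + (1 - q)"
  define x where "x = (p - q) * (p - q)"
  have pp: "p \<in> A" "p * p = p" and qq: "q \<in> A" "q * q = q"
    using p q unfolding sa_proj_def by auto
  have "a \<in> Pos" unfolding a_def using pos_add proj_pos proj_compl p q by blast
  then obtain e where e: "0 < e" "a - e *\<^sub>R 1 \<in> Pos"
    using pos_invertible_ge_scalar inv unfolding a_def by blast
  have x: "x \<in> A" unfolding x_def using square_pos pos_mem diff_mem pp qq by blast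
  define y where "y = x - (e/2) *\<^sub>R 1"
  have y: "y \<in> A" "y * p = p * y" "y * q = q * y"
    using diff_mem[OF x scaleR_one_mem] idempotents_sq_diff_commute[OF pp(2) qq(2)]
    unfolding y_def x_def by (simp_all add: algebra_simps)
  have "p * x * p = p * a * p" "q * x * q = q * a * q"
    using idempotents_compress_sq_diff[OF pp(2) qq(2)] unfolding x_def a_def by simp_all
  then have "p * y * p - (e/2) *\<^sub>R p = p * (a - e *\<^sub>R 1) * p"
    and "q * y * q - (e/2) *\<^sub>R q = q * (a - e *\<^sub>R 1) * q"
    unfolding y_def using pp(2) qq(2) by (simp_all add: algebra_simps flip: scaleR_add_left)
  then have "y \<in> Pos"
    using pos_if_compressions_ge[OF p q meet y, of "e/2"] pos_conj[OF proj_pos e(2)] p q e(1)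
    by simp
  then have "sa_invertible A x"
    using invertible_if_ge_scalar[OF x, of "e/2"] e(1) unfolding y_def by simp
  then have "sa_invertible A (a * (p + q))"
    using idempotents_sq_diff[OF pp(2) qq(2)] unfolding x_def a_def by simp
  moreover have "a \<in> A" "p + q \<in> A" using \<open>a \<in> Pos\<close> pos_mem add_mem pp qq by auto
  ultimately show ?thesis
    using invertible_mult_iff idempotents_compl_sum_commute[OF pp(2) qq(2)] unfolding a_def by blast
qed

lemma invertible_add_scalar_if_invertible_diff_scalar:
  assumes p: "p \<in> sa_proj A" and q: "q \<in> sa_proj A"
    and meet: "sa_is_meet A Pos p q 0" and meet': "sa_is_meet A Pos (1 - p) (1 - q) 0"
    and inv: "sa_invertible A (p + q - 1 - m *\<^sub>R 1)"
  shows "sa_invertible A (p + q - 1 + m *\<^sub>R 1)"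
proof -
  have pp: "p \<in> A" "p * p = p" and qq: "q \<in> A" "q * q = q"
    using p q unfolding sa_proj_def by auto
  consider "m = 1" | "m = -1" | "m * m \<noteq> 1" using square_eq_1_iff by blast
  then show ?thesis
  proof cases
    case 1
    then have "sa_invertible A ((1 - p) + (1 - q))"
      using invertible_uminus[OF inv] by (simp add: algebra_simps)
    then show ?thesis using invertible_add_if_invertible_add_compl[OF p q meet'] 1 by simp
  next
    case 2
    then have "sa_invertible A ((1 - (1 - p)) + (1 - (1 - q)))" using inv by simp
    then have "sa_invertible A ((1 - p) + (1 - q))"
      using invertible_add_if_invertible_add_compl[OF proj_compl[OF p] proj_compl[OF q]] meet by simp
    then show ?thesis using invertible_uminus 2 by (fastforce simp: algebra_simps)
  next
    case 3
    define b where "b = p + q - 1"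
    define d where "d = p - q"
    obtain y where y: "y \<in> A" "(b - m *\<^sub>R 1) * y = 1" "y * (b - m *\<^sub>R 1) = 1"
      using inv unfolding sa_invertible_def b_def by blast
    have "b \<in> A" "d \<in> A" unfolding b_def d_def using pp qq one_mem add_mem diff_mem by auto
    then have "(1 / (1 - m * m)) *\<^sub>R (b - m *\<^sub>R 1 - d * y * d) \<in> A"
      using y(1) scaleR_mem diff_mem scaleR_one_mem conj_mem by meson
    then show ?thesis
      using anticommute_inverse[OF _ _ 3 y(2,3)] idempotents_anticommute[OF pp(2) qq(2)]
        idempotents_sq_add[OF pp(2) qq(2)]
      unfolding sa_invertible_def b_def d_def by blast
  qed
qed

lemma invertible_diff_scalar_iff_abs:
  assumes p: "p \<in> sa_proj A" and q: "q \<in> sa_proj A"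
    and meet: "sa_is_meet A Pos p q 0" and meet': "sa_is_meet A Pos (1 - p) (1 - q) 0"
  defines "c \<equiv> sa_sqrt Pos ((p + q - 1) * (p + q - 1))"
  shows "sa_invertible A (p + q - 1 - m *\<^sub>R 1) \<longleftrightarrow>
    sa_invertible A (c - m *\<^sub>R 1) \<and> sa_invertible A (c + m *\<^sub>R 1)"
proof -
  define b where "b = p + q - 1"
  have b: "b \<in> A" unfolding b_def using p q one_mem add_mem diff_mem unfolding sa_proj_def by auto
  then have bb: "b * b \<in> Pos" using square_pos by blast
  have c: "c \<in> A" "c * c = b * b"
    using sqrt_pos[OF bb] sqrt_mult_self[OF bb] pos_mem unfolding c_def b_def by auto
  have "sa_invertible A (b - m *\<^sub>R 1) \<longleftrightarrow> sa_invertible A (b + m *\<^sub>R 1)"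
    using invertible_add_scalar_if_invertible_diff_scalar[OF p q meet meet', of m]
      invertible_add_scalar_if_invertible_diff_scalar[OF p q meet meet', of "- m"]
    unfolding b_def by auto
  moreover have "sa_invertible A ((b - m *\<^sub>R 1) * (b + m *\<^sub>R 1)) \<longleftrightarrow>
      sa_invertible A (b - m *\<^sub>R 1) \<and> sa_invertible A (b + m *\<^sub>R 1)"
    by (rule invertible_mult_iff) (use b scaleR_one_mem diff_mem add_mem in \<open>auto simp: algebra_simps\<close>)
  ultimately have "sa_invertible A (b - m *\<^sub>R 1) \<longleftrightarrow> sa_invertible A ((b - m *\<^sub>R 1) * (b + m *\<^sub>R 1))"
    by blast
  also have "(b - m *\<^sub>R 1) * (b + m *\<^sub>R 1) = (c - m *\<^sub>R 1) * (c + m *\<^sub>R 1)"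
    using c(2) by (simp add: algebra_simps)
  also have "sa_invertible A \<dots> \<longleftrightarrow> sa_invertible A (c - m *\<^sub>R 1) \<and> sa_invertible A (c + m *\<^sub>R 1)"
    by (rule invertible_mult_iff) (use c(1) scaleR_one_mem diff_mem add_mem in \<open>auto simp: algebra_simps\<close>)
  finally show ?thesis unfolding b_def .
qed

end

theorem theorem8p1:
  fixes A Pos :: "'a::real_algebra_1 set" and p q c :: 'a
  assumes "synaptic_algebra A Pos"
    and "p \<in> sa_proj A" and "q \<in> sa_proj A"
    and "sa_is_meet A Pos p q 0"
    and "sa_is_meet A Pos p (1 - q) 0"
    and "sa_is_meet A Pos (1 - p) q 0"
    and "sa_is_meet A Pos (1 - p) (1 - q) 0"
    and "c = sa_sqrt Pos (p * q * p + (1 - p) * (1 - q) * (1 - p))"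
  shows "sa_spectrum A (p + q) =
           {1 + g | g. g \<in> sa_spectrum A c} \<union> {1 - g | g. g \<in> sa_spectrum A c}"
proof -
  interpret synaptic A Pos using assms(1) by unfold_locales
  have "p * p = p" "q * q = q" using assms(2,3) unfolding sa_proj_def by auto
  then have "c = sa_sqrt Pos ((p + q - 1) * (p + q - 1))"
    using assms(8) idempotents_sum_sq by metis
  then have "l \<in> sa_spectrum A (p + q) \<longleftrightarrow> l - 1 \<in> sa_spectrum A c \<or> 1 - l \<in> sa_spectrum A c" for l
    using invertible_diff_scalar_iff_abs[OF assms(2,3,4,7), of "l - 1"]
    unfolding sa_spectrum_def by (auto simp: algebra_simps)
  moreover have "{1 + g | g. g \<in> S} \<union> {1 - g | g. g \<in> S} = {l. l - 1 \<in> S \<or> 1 - l \<in> S}"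
    for S :: "real set"
    by (auto simp: algebra_simps) (metis add_diff_cancel_left' diff_diff_cancel)
  ultimately show ?thesis by blast
qed

end
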